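(* Let $G$ be a pseudo-Boolean formula and $\omega$ a substitution with $\mathrm{supp}(\omega)\subseteq\mathrm{var}(G)$. Let $\vec a$ be a list of variables with $\vec a\cap\mathrm{var}(G)=\emptyset$, let $\vec z$ be a list of $n$ variables disjoint from $\vec a$, and let $\mathcal{O}(\vec u,\vec v,\vec a)$, $\mathcal{S}(\vec u,\vec v,\vec a)$ be formulas such that $\mathcal{S}$ is a specification over $\vec a$ and the relation $\preceq$ defined by $\mathcal{O}$ and $\mathcal{S}$ is a preorder. Then: 1. If $G\cup\mathcal{S}(\vec z{\upharpoonright}_\omega,\vec z,\vec a)\vdash\mathcal{O}(\vec z{\upharpoonright}_\omega,\vec z,\vec a)$, then for each assignment $\alpha$ satisfying $G$, $\alpha\circ\omega\preceq\alpha$ holds. 2. If $G\cup\mathcal{S}(\vec z,\vec z{\upharpoonright}_\omega,\vec a)\cup\mathcal{O}(\vec z,\vec z{\upharpoonright}_\omega,\vec a)\vdash\bot$, then for each assignment $\alpha$ satisfying $G$, $\alpha\not\preceq\alpha\circ\omega$ holds.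
   Context: A literal is $x$ or $\bar x=1-x$; a PB constraint is $\sum_i a_i\ell_i\ge A$; a formula is a set of PB constraints; $\bot$ is $0\ge1$; $\mathrm{var}(G)$ is the set of variables of $G$. A substitution $\omega$ maps variables to $0,1$ or literals, extended by $\omega(\bar x)=\overline{\omega(x)}$; $\mathrm{supp}(\omega)=\{x:\omega(x)\ne x\}$; $\vec z{\upharpoonright}_\omega=\omega(z_1),\dots,\omega(z_n)$; $(\alpha\circ\omega)(x)=\alpha(\omega(x))$. For a formula $F(\vec u,\vec v,\vec a)$, $F(\vec w,\vec w',\vec a)$ denotes substitution of $\vec w,\vec w'$ for $\vec u,\vec v$. $\vdash$ denotes cutting planes derivability (sound). Assignments are total on the non-auxiliary variables under consideration (including $\vec z$ and $\mathrm{var}(G)$) and need not assign $\vec a$. A formula $\mathcal{S}(\vec x,\vec a)=\{C_1,\dots,C_m\}$ is a specification over $\vec a$ if there are substitutions $\omega_i$ with $\mathrm{supp}(\omega_i)\subseteq\vec a$ such that $\{C_1,\dots,C_{i-1},\neg C_i\}\vdash\{C_1{\upharpoonright}_{\omega_i},\dots,C_i{\upharpoonright}_{\omega_i}\}$ for each $i$, where $\neg(\sum a_i\ell_i\ge A)$ is $\sum a_i\bar\ell_i\ge\sum a_i-A+1$. The relation $\preceq$ defined by $\mathcal{O},\mathcal{S}$ on assignments $\alpha,\beta$: $\alpha\preceq\beta$ iff there is an assignment $\rho$ to $\vec a$ such that $\mathcal{S}(\vec z{\upharpoonright}_\alpha,\vec z{\upharpoonright}_\beta,\vec a{\upharpoonright}_\rho)\wedge\mathcal{O}(\vec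 z{\upharpoonright}_\alpha,\vec z{\upharpoonright}_\beta,\vec a{\upharpoonright}_\rho)$ is true. *)

theory Defs
  imports Main
begin

datatype 'v lit = Pos 'v | Neg 'v

text \<open>Values a substitution may assign to a variable: a constant 0/1 or a literal.\<close>
datatype 'v sval = Cst bool | Lt "'v lit"

text \<open>A PB constraint  sum_i a_i l_i >= A  is a list of (coefficient, literal) pairs and a bound.\<close>
type_synonym 'v pbc = "(int \<times> 'v lit) list \<times> int"
type_synonym 'v formula = "'v pbc set"
type_synonym 'v subst = "'v \<Rightarrow> 'v sval"
type_synonym 'v assignment = "'v \<Rightarrow> bool"

fun lit_var :: "'v lit \<Rightarrow> 'v" where
  "lit_var (Pos x) = x" | "lit_var (Neg x) = x"

fun neg_lit :: "'v lit \<Rightarrow> 'v lit" where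
  "neg_lit (Pos x) = Neg x" | "neg_lit (Neg x) = Pos x"

fun lit_val :: "'v assignment \<Rightarrow> 'v lit \<Rightarrow> bool" where
  "lit_val \<alpha> (Pos x) = \<alpha> x" | "lit_val \<alpha> (Neg x) = (\<not> \<alpha> x)"

definition sat_pbc :: "'v assignment \<Rightarrow> 'v pbc \<Rightarrow> bool" where
  "sat_pbc \<alpha> C = ((\<Sum>(c, l) \<leftarrow> fst C. c * of_bool (lit_val \<alpha> l)) \<ge> snd C)"

definition sat :: "'v assignment \<Rightarrow> 'v formula \<Rightarrow> bool" where
  "sat \<alpha> F = (\<forall>C\<in>F. sat_pbc \<alpha> C)"

definition vars_pbc :: "'v pbc \<Rightarrow> 'v set" where
  "vars_pbc C = lit_var ` snd ` set (fst C)"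

definition vars :: "'v formula \<Rightarrow> 'v set" where
  "vars F = (\<Union>C\<in>F. vars_pbc C)"

definition bot_pbc :: "'v pbc" where
  "bot_pbc = ([], 1)"

definition neg_pbc :: "'v pbc \<Rightarrow> 'v pbc" where
  "neg_pbc C = (map (\<lambda>(c, l). (c, neg_lit l)) (fst C),
                (\<Sum>(c, l) \<leftarrow> fst C. c) - snd C + 1)"

fun neg_sval :: "'v sval \<Rightarrow> 'v sval" where
  "neg_sval (Cst b) = Cst (\<not> b)" | "neg_sval (Lt l) = Lt (neg_lit l)"

fun subst_lit :: "'v subst \<Rightarrow> 'v lit \<Rightarrow> 'v sval" where
  "subst_lit \<omega> (Pos x) = \<omega> x" | "subst_lit \<omega> (Neg x) = neg_sval (\<omega> x)"

text \<open>Applying a substitution to a constraint: literals mapped to constants are moved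
  into the bound.\<close>
definition subst_pbc :: "'v subst \<Rightarrow> 'v pbc \<Rightarrow> 'v pbc" where
  "subst_pbc \<omega> C =
     (concat (map (\<lambda>(c, l). case subst_lit \<omega> l of Lt l' \<Rightarrow> [(c, l')] | Cst _ \<Rightarrow> []) (fst C)),
      snd C - (\<Sum>(c, l) \<leftarrow> fst C. case subst_lit \<omega> l of Lt _ \<Rightarrow> 0 | Cst b \<Rightarrow> c * of_bool b))"

definition subst_formula :: "'v subst \<Rightarrow> 'v formula \<Rightarrow> 'v formula" where
  "subst_formula \<omega> F = subst_pbc \<omega> ` F"

definition supp :: "'v subst \<Rightarrow> 'v set" where
  "supp \<omega> = {x. \<omega> x \<noteq> Lt (Pos x)}"

definition sval_vars :: "'v sval \<Rightarrow> 'v set" where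
  "sval_vars s = (case s of Cst _ \<Rightarrow> {} | Lt l \<Rightarrow> {lit_var l})"

fun sval_val :: "'v assignment \<Rightarrow> 'v sval \<Rightarrow> bool" where
  "sval_val \<alpha> (Cst b) = b" | "sval_val \<alpha> (Lt l) = lit_val \<alpha> l"

definition comp_assign :: "'v assignment \<Rightarrow> 'v subst \<Rightarrow> 'v assignment" where
  "comp_assign \<alpha> \<omega> = (\<lambda>x. sval_val \<alpha> (\<omega> x))"

text \<open>z restricted by omega: omega(z_1),...,omega(z_n).\<close>
definition restr :: "'v list \<Rightarrow> 'v subst \<Rightarrow> 'v sval list" where
  "restr zs \<omega> = map \<omega> zs"

definition id_subst :: "'v subst" where
  "id_subst = (\<lambda>x. Lt (Pos x))"

definition assign_subst :: "'v assignment \<Rightarrow> 'v subst" where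
  "assign_subst \<alpha> = (\<lambda>x. Cst (\<alpha> x))"

text \<open>For a formula F(u, v, a): the (simultaneous) substitution of w for u and w' for v,
  identity elsewhere; F(w, w', a) is  subst_formula (inst u v w w') F.\<close>
definition inst :: "'v list \<Rightarrow> 'v list \<Rightarrow> 'v sval list \<Rightarrow> 'v sval list \<Rightarrow> 'v subst" where
  "inst u v w w' = (\<lambda>x. case map_of (zip u w) x of Some s \<Rightarrow> s
                        | None \<Rightarrow> (case map_of (zip v w') x of Some s \<Rightarrow> s | None \<Rightarrow> Lt (Pos x)))"

text \<open>Substitution of u, v and a simultaneously (used for F(w, w', a restricted by rho)).\<close>
definition inst3 :: "'v list \<Rightarrow> 'v list \<Rightarrow> 'v list \<Rightarrow> 'v sval list \<Rightarrow> 'v sval list \<Rightarrow> 'v sval list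
    \<Rightarrow> 'v subst" where
  "inst3 u v a w w' w'' = (\<lambda>x. case map_of (zip a w'') x of Some s \<Rightarrow> s
                              | None \<Rightarrow> inst u v w w' x)"

text \<open>Linear form of a constraint: coefficient of each variable (using neg x = 1 - x)
  and the constant part.\<close>
definition var_coeff :: "(int \<times> 'v lit) list \<Rightarrow> 'v \<Rightarrow> int" where
  "var_coeff ts x = (\<Sum>(c, l) \<leftarrow> ts. if l = Pos x then c else if l = Neg x then - c else 0)"

definition const_part :: "(int \<times> 'v lit) list \<Rightarrow> int" where
  "const_part ts = (\<Sum>(c, l) \<leftarrow> ts. case l of Neg _ \<Rightarrow> c | Pos _ \<Rightarrow> 0)"

inductive cp_derives :: "'v formula \<Rightarrow> 'v pbc \<Rightarrow> bool" (infix "\<turnstile>cp" 50) for F where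
  cp_axiom: "C \<in> F \<Longrightarrow> F \<turnstile>cp C"
| cp_lit_axiom: "F \<turnstile>cp ([(1, l)], 0)"
| cp_add: "F \<turnstile>cp (ts1, A1) \<Longrightarrow> F \<turnstile>cp (ts2, A2) \<Longrightarrow> F \<turnstile>cp (ts1 @ ts2, A1 + A2)"
| cp_mult: "k > 0 \<Longrightarrow> F \<turnstile>cp (ts, A) \<Longrightarrow> F \<turnstile>cp (map (\<lambda>(c, l). (k * c, l)) ts, k * A)"
| cp_div: "k > 0 \<Longrightarrow> (\<forall>(c, l) \<in> set ts. k dvd c) \<Longrightarrow> F \<turnstile>cp (ts, A)
            \<Longrightarrow> F \<turnstile>cp (map (\<lambda>(c, l). (c div k, l)) ts, (A + k - 1) div k)"
| cp_rewrite: "F \<turnstile>cp (ts, A) \<Longrightarrow> var_coeff ts' = var_coeff ts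
            \<Longrightarrow> A' - const_part ts' = A - const_part ts \<Longrightarrow> F \<turnstile>cp (ts', A')"

definition cp_derives_set :: "'v formula \<Rightarrow> 'v formula \<Rightarrow> bool" (infix "\<turnstile>" 50) where
  "F \<turnstile> G = (\<forall>C\<in>G. F \<turnstile>cp C)"

definition is_spec :: "'v list \<Rightarrow> 'v pbc list \<Rightarrow> bool" where
  "is_spec as S = (\<exists>\<omega>s :: 'v subst list. length \<omega>s = length S \<and>
     (\<forall>i < length S. supp (\<omega>s ! i) \<subseteq> set as \<and>
        (set (take i S) \<union> {neg_pbc (S ! i)}) \<turnstile> subst_formula (\<omega>s ! i) (set (take (Suc i) S))))"

text \<open>A formula is true if every assignment satisfies it (used for variable-free formulas).\<close>
definition true_formula :: "'v formula \<Rightarrow> bool" where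
  "true_formula F = (\<forall>\<gamma>. sat \<gamma> F)"

definition prec :: "'v formula \<Rightarrow> 'v pbc list \<Rightarrow> 'v list \<Rightarrow> 'v list \<Rightarrow> 'v list \<Rightarrow> 'v list
    \<Rightarrow> 'v assignment \<Rightarrow> 'v assignment \<Rightarrow> bool" where
  "prec Ob S u v as zs \<alpha> \<beta> = (\<exists>\<rho> :: 'v assignment.
     true_formula (subst_formula
        (inst3 u v as (restr zs (assign_subst \<alpha>)) (restr zs (assign_subst \<beta>))
               (restr as (assign_subst \<rho>))) (set S \<union> Ob)))"

definition preorder_rel :: "('a \<Rightarrow> 'a \<Rightarrow> bool) \<Rightarrow> bool" where
  "preorder_rel R = ((\<forall>x. R x x) \<and> (\<forall>x y z. R x y \<longrightarrow> R y z \<longrightarrow> R x z))"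

end

theory Submission
  imports Defs
begin

(* Cutting planes is sound, and a substituted formula holds under an assignment iff the
  original holds under the assignment composed with the substitution.  A specification can
  be satisfied starting from any assignment by changing only the auxiliary variables: if C_i
  fails, omega_i, which moves only auxiliary variables, turns a model of C_1 ... C_(i-1) and
  the negation of C_i into a model of C_1 ... C_i.  So a model alpha of G, modified on the
  auxiliary variables to satisfy S(z|omega, z, a), still satisfies G and hence, by the
  derivation, O(z|omega, z, a); this witnesses alpha o omega <= alpha.  Dually, a witness for
  alpha <= alpha o omega would give a model of G, S(z, z|omega, a) and O(z, z|omega, a),
  hence of bot. *)

definition lhs_val :: "'v assignment \<Rightarrow> (int \<times> 'v lit) list \<Rightarrow> int" where
  "lhs_val \<alpha> ts = (\<Sum>(c, l) \<leftarrow> ts. c * of_bool (lit_val \<alpha> l))"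

lemma lhs_val_simps [simp]:
  "lhs_val \<alpha> [] = 0"
  "lhs_val \<alpha> ((c, l) # ts) = c * of_bool (lit_val \<alpha> l) + lhs_val \<alpha> ts"
  "lhs_val \<alpha> (ts1 @ ts2) = lhs_val \<alpha> ts1 + lhs_val \<alpha> ts2"
  by (auto simp: lhs_val_def)

lemma sat_pbc_iff_lhs_val: "sat_pbc \<alpha> C \<longleftrightarrow> snd C \<le> lhs_val \<alpha> (fst C)"
  by (simp add: sat_pbc_def lhs_val_def)

lemma lhs_val_scale: "lhs_val \<alpha> (map (\<lambda>(c, l). (k * c, l)) ts) = k * lhs_val \<alpha> ts"
  by (induction ts) (auto simp: algebra_simps)

lemma lhs_val_div:
  "\<forall>(c, l) \<in> set ts. k dvd c \<Longrightarrow> k * lhs_val \<alpha> (map (\<lambda>(c, l). (c div k, l)) ts) = lhs_val \<alpha> ts"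
  by (induction ts) (auto simp: algebra_simps)

lemma lhs_val_neg_lits:
  "lhs_val \<alpha> (map (\<lambda>(c, l). (c, neg_lit l)) ts) = (\<Sum>(c, l) \<leftarrow> ts. c) - lhs_val \<alpha> ts"
proof (induction ts)
  case (Cons t ts)
  then show ?case by (cases t; cases "snd t") (auto simp: algebra_simps)
qed simp

lemma lhs_val_linear_form:
  assumes "finite V" and "lit_var ` snd ` set ts \<subseteq> V"
  shows "lhs_val \<alpha> ts = const_part ts + (\<Sum>x\<in>V. var_coeff ts x * of_bool (\<alpha> x))"
  using assms(2)
proof (induction ts)
  case Nil
  then show ?case by (simp add: const_part_def var_coeff_def)
next
  case (Cons t ts)
  obtain c l where t: "t = (c, l)" by force
  define sc where "sc = (if l = Pos (lit_var l) then c else - c)"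
  have "lit_var l \<in> V" using Cons.prems t by auto
  have "(\<Sum>x\<in>V. var_coeff (t # ts) x * of_bool (\<alpha> x))
      = (\<Sum>x\<in>V. if x = lit_var l then sc * of_bool (\<alpha> x) else 0)
        + (\<Sum>x\<in>V. var_coeff ts x * of_bool (\<alpha> x))"
    unfolding sum.distrib[symmetric]
    by (rule sum.cong) (cases l; auto simp: var_coeff_def t sc_def algebra_simps)+
  also have "\<dots> = sc * of_bool (\<alpha> (lit_var l)) + (\<Sum>x\<in>V. var_coeff ts x * of_bool (\<alpha> x))"
    using assms(1) \<open>lit_var l \<in> V\<close> by simp
  finally show ?case
    using Cons t by (cases l) (auto simp: const_part_def sc_def algebra_simps)
qed

lemma ceil_div_le:
  fixes A w k :: int
  assumes "k > 0" and "A \<le> k * w"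
  shows "(A + k - 1) div k \<le> w"
proof -
  have "(A + k - 1) div k \<le> (k * w + (k - 1)) div k"
    using assms by (intro zdiv_mono1) simp_all
  also have "\<dots> = w"
    using assms(1) by simp
  finally show ?thesis .
qed

lemma cp_derives_sound: "F \<turnstile>cp C \<Longrightarrow> sat \<alpha> F \<Longrightarrow> sat_pbc \<alpha> C"
proof (induction C rule: cp_derives.induct)
  case (cp_axiom C)
  then show ?case by (simp add: sat_def)
next
  case (cp_lit_axiom l)
  then show ?case by (simp add: sat_pbc_iff_lhs_val)
next
  case (cp_add ts1 A1 ts2 A2)
  then show ?case by (simp add: sat_pbc_iff_lhs_val)
next
  case (cp_mult k ts A)
  then show ?case by (simp add: sat_pbc_iff_lhs_val lhs_val_scale)
next
  case (cp_div k ts A)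
  then show ?case
    using ceil_div_le[of k A] lhs_val_div[of ts k \<alpha>] by (simp add: sat_pbc_iff_lhs_val)
next
  case (cp_rewrite ts A ts' A')
  define V where "V = lit_var ` snd ` set ts \<union> lit_var ` snd ` set ts'"
  have "finite V" by (simp add: V_def)
  then have "lhs_val \<alpha> ts' - const_part ts' = lhs_val \<alpha> ts - const_part ts"
    using lhs_val_linear_form[of V ts \<alpha>] lhs_val_linear_form[of V ts' \<alpha>] cp_rewrite.hyps(2)
    by (simp add: V_def)
  then show ?case
    using cp_rewrite by (simp add: sat_pbc_iff_lhs_val)
qed

lemma cp_derives_set_sound: "F \<turnstile> G \<Longrightarrow> sat \<alpha> F \<Longrightarrow> sat \<alpha> G"
  using cp_derives_sound unfolding cp_derives_set_def sat_def by blast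

lemma sat_union [simp]: "sat \<alpha> (F \<union> G) \<longleftrightarrow> sat \<alpha> F \<and> sat \<alpha> G"
  by (auto simp: sat_def)

lemma sat_neg_pbc: "\<not> sat_pbc \<alpha> C \<Longrightarrow> sat_pbc \<alpha> (neg_pbc C)"
  by (simp add: sat_pbc_iff_lhs_val neg_pbc_def lhs_val_neg_lits)

lemma not_sat_bot: "\<not> sat \<alpha> {bot_pbc}"
  by (simp add: sat_def sat_pbc_def bot_pbc_def)

lemma lit_val_neg_lit [simp]: "lit_val \<alpha> (neg_lit l) \<longleftrightarrow> \<not> lit_val \<alpha> l"
  by (cases l) auto

lemma sval_val_neg_sval [simp]: "sval_val \<alpha> (neg_sval s) \<longleftrightarrow> \<not> sval_val \<alpha> s"
  by (cases s) auto

lemma sval_val_subst_lit: "sval_val \<gamma> (subst_lit \<sigma> l) = lit_val (comp_assign \<gamma> \<sigma>) l"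
  by (cases l) (auto simp: comp_assign_def)

lemma lhs_val_subst:
  "lhs_val \<gamma> (concat (map (\<lambda>(c, l). case subst_lit \<sigma> l of Lt l' \<Rightarrow> [(c, l')] | Cst _ \<Rightarrow> []) ts))
   + (\<Sum>(c, l) \<leftarrow> ts. case subst_lit \<sigma> l of Lt _ \<Rightarrow> 0 | Cst b \<Rightarrow> c * of_bool b)
   = lhs_val (comp_assign \<gamma> \<sigma>) ts"
proof (induction ts)
  case (Cons t ts)
  obtain c l where t: "t = (c, l)" by force
  then show ?case
    using Cons sval_val_subst_lit[of \<gamma> \<sigma> l] by (cases "subst_lit \<sigma> l") auto
qed simp

lemma sat_pbc_subst_pbc: "sat_pbc \<gamma> (subst_pbc \<sigma> C) \<longleftrightarrow> sat_pbc (comp_assign \<gamma> \<sigma>) C"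
  using lhs_val_subst[of \<gamma> \<sigma> "fst C"]
  unfolding sat_pbc_iff_lhs_val subst_pbc_def by (simp add: algebra_simps)

lemma sat_subst_formula: "sat \<gamma> (subst_formula \<sigma> F) \<longleftrightarrow> sat (comp_assign \<gamma> \<sigma>) F"
  by (simp add: sat_def subst_formula_def sat_pbc_subst_pbc)

lemma lit_val_cong: "\<alpha> (lit_var l) = \<beta> (lit_var l) \<Longrightarrow> lit_val \<alpha> l = lit_val \<beta> l"
  by (cases l) auto

lemma sval_val_cong: "\<forall>x\<in>sval_vars s. \<alpha> x = \<beta> x \<Longrightarrow> sval_val \<alpha> s = sval_val \<beta> s"
  by (cases s) (simp_all add: sval_vars_def, metis lit_val_cong)

lemma sat_pbc_cong:
  assumes "\<forall>x\<in>vars_pbc C. \<alpha> x = \<beta> x"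
  shows "sat_pbc \<alpha> C = sat_pbc \<beta> C"
proof -
  have "lit_val \<alpha> l = lit_val \<beta> l" if "(c, l) \<in> set (fst C)" for c l
    using that assms by (intro lit_val_cong) (force simp: vars_pbc_def)
  then have "map (\<lambda>(c, l). c * of_bool (lit_val \<alpha> l)) (fst C)
           = map (\<lambda>(c, l). c * of_bool (lit_val \<beta> l)) (fst C)"
    by (intro map_cong) auto
  then show ?thesis
    unfolding sat_pbc_def by (simp only:)
qed

lemma sat_cong: "\<forall>x\<in>vars F. \<alpha> x = \<beta> x \<Longrightarrow> sat \<alpha> F = sat \<beta> F"
  unfolding sat_def vars_def using sat_pbc_cong by (metis UN_I)

lemma comp_assign_id_subst [simp]: "comp_assign \<alpha> id_subst = \<alpha>"
  by (simp add: comp_assign_def id_subst_def)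

lemma comp_assign_override_on:
  assumes "\<forall>x\<in>A. \<sigma> x = Lt (Pos x)" and "\<forall>x. x \<notin> A \<longrightarrow> sval_vars (\<sigma> x) \<inter> A = {}"
  shows "comp_assign (override_on \<alpha> \<rho> A) \<sigma> = override_on (comp_assign \<alpha> \<sigma>) \<rho> A"
proof
  fix x
  show "comp_assign (override_on \<alpha> \<rho> A) \<sigma> x = override_on (comp_assign \<alpha> \<sigma>) \<rho> A x"
  proof (cases "x \<in> A")
    case True
    then show ?thesis using assms(1) by (simp add: comp_assign_def)
  next
    case False
    then have "\<forall>y\<in>sval_vars (\<sigma> x). y \<notin> A"
      using assms(2) by blast
    then have "sval_val (override_on \<alpha> \<rho> A) (\<sigma> x) = sval_val \<alpha> (\<sigma> x)"
      by (intro sval_val_cong) simp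
    then show ?thesis using False by (simp add: comp_assign_def)
  qed
qed

lemma is_spec_sat_override_on:
  assumes "is_spec as S"
  shows "\<exists>\<rho>. sat (override_on \<delta> \<rho> (set as)) (set S)"
proof -
  obtain \<omega>s :: "'a subst list" where
    supp_\<omega>s: "\<And>i. i < length S \<Longrightarrow> supp (\<omega>s ! i) \<subseteq> set as" and
    repair: "\<And>i. i < length S \<Longrightarrow>
      set (take i S) \<union> {neg_pbc (S ! i)} \<turnstile> subst_formula (\<omega>s ! i) (set (take (Suc i) S))"
    using assms unfolding is_spec_def by blast
  have "\<exists>\<rho>. sat (override_on \<delta> \<rho> (set as)) (set (take i S))" if "i \<le> length S" for i
    using that
  proof (induction i)
    case 0
    then show ?case by (simp add: sat_def)
  next
    case (Suc i)
    then obtain \<rho> where IH: "sat (override_on \<delta> \<rho> (set as)) (set (take i S))" by auto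
    define \<gamma> where "\<gamma> = override_on \<delta> \<rho> (set as)"
    have i: "i < length S" using Suc.prems by simp
    have take_Suc: "set (take (Suc i) S) = insert (S ! i) (set (take i S))"
      using i by (simp add: take_Suc_conv_app_nth)
    show ?case
    proof (cases "sat_pbc \<gamma> (S ! i)")
      case True
      then show ?thesis using IH take_Suc by (auto simp: sat_def \<gamma>_def)
    next
      case False
      then have "sat \<gamma> (set (take i S) \<union> {neg_pbc (S ! i)})"
        using IH sat_neg_pbc by (simp add: sat_def \<gamma>_def)
      then have "sat (comp_assign \<gamma> (\<omega>s ! i)) (set (take (Suc i) S))"
        using cp_derives_set_sound[OF repair[OF i]] by (simp add: sat_subst_formula)
      moreover have "(\<omega>s ! i) x = Lt (Pos x)" if "x \<notin> set as" for x
        using supp_\<omega>s[OF i] that by (auto simp: supp_def)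
      then have "override_on \<delta> (comp_assign \<gamma> (\<omega>s ! i)) (set as) = comp_assign \<gamma> (\<omega>s ! i)"
        by (auto simp: fun_eq_iff override_on_def comp_assign_def \<gamma>_def)
      ultimately show ?thesis by metis
    qed
  qed
  from this[of "length S"] show ?thesis by simp
qed

lemma inst_notin: "x \<notin> set u \<Longrightarrow> x \<notin> set v \<Longrightarrow> inst u v p q x = Lt (Pos x)"
  by (auto simp: inst_def split: option.split dest!: map_of_SomeD set_zip_leftD)

lemma inst_range: "inst u v p q x \<in> set p \<union> set q \<union> {Lt (Pos x)}"
  by (auto simp: inst_def split: option.split dest!: map_of_SomeD set_zip_rightD)

lemma inst3_restr_assign_subst:
  "inst3 u v as p q (restr as (assign_subst \<rho>)) x
     = (if x \<in> set as then Cst (\<rho> x) else inst u v p q x)"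
  by (simp add: inst3_def restr_def assign_subst_def map_of_zip_map)

lemma map_of_zip_map_right: "map_of (zip xs (map f ys)) x = map_option f (map_of (zip xs ys) x)"
  by (simp add: zip_map2 map_of_map)

lemma inst_map:
  assumes "length p = length u" and "length q = length v" and "x \<in> set u \<union> set v"
  shows "inst u v (map f p) (map f q) x = f (inst u v p q x)"
proof (cases "x \<in> set u")
  case True
  then obtain s where "map_of (zip u p) x = Some s"
    using assms(1) map_of_zip_is_Some by metis
  then show ?thesis by (simp add: inst_def map_of_zip_map_right)
next
  case False
  then have "x \<in> set v"
    using assms(3) by blast
  then obtain s where "map_of (zip v q) x = Some s"
    using assms(2) map_of_zip_is_Some by metis
  moreover have "map_of (zip u p) x = None"
    using False assms(1) by simp
  ultimately show ?thesis by (simp add: inst_def map_of_zip_map_right)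
qed

lemma comp_assign_override_on_inst:
  assumes "set u \<inter> A = {}" and "set v \<inter> A = {}"
    and "\<forall>z\<in>set zs. sval_vars (\<pi> z) \<inter> A = {}" and "\<forall>z\<in>set zs. sval_vars (\<kappa> z) \<inter> A = {}"
  shows "comp_assign (override_on \<alpha> \<rho> A) (inst u v (restr zs \<pi>) (restr zs \<kappa>))
       = override_on (comp_assign \<alpha> (inst u v (restr zs \<pi>) (restr zs \<kappa>))) \<rho> A"
proof (rule comp_assign_override_on)
  show "\<forall>x\<in>A. inst u v (restr zs \<pi>) (restr zs \<kappa>) x = Lt (Pos x)"
  proof
    fix x
    assume "x \<in> A"
    then have "x \<notin> set u" and "x \<notin> set v"
      using assms(1,2) by auto
    then show "inst u v (restr zs \<pi>) (restr zs \<kappa>) x = Lt (Pos x)"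
      by (rule inst_notin)
  qed
  show "\<forall>x. x \<notin> A \<longrightarrow> sval_vars (inst u v (restr zs \<pi>) (restr zs \<kappa>) x) \<inter> A = {}"
  proof (intro allI impI)
    fix x
    assume "x \<notin> A"
    moreover have "inst u v (restr zs \<pi>) (restr zs \<kappa>) x \<in> \<pi> ` set zs \<union> \<kappa> ` set zs \<union> {Lt (Pos x)}"
      using inst_range[of u v "restr zs \<pi>" "restr zs \<kappa>" x] by (simp add: restr_def)
    ultimately show "sval_vars (inst u v (restr zs \<pi>) (restr zs \<kappa>) x) \<inter> A = {}"
      using assms(3,4) by (auto simp: sval_vars_def[of "Lt (Pos x)"]) blast+
  qed
qed

lemma prec_comp_assign_iff:
  fixes \<gamma> :: "'v assignment"
  assumes "length u = length zs" and "length v = length zs"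
    and "set u \<inter> set as = {}" and "set v \<inter> set as = {}"
    and "vars (set S \<union> Ob) \<subseteq> set u \<union> set v \<union> set as"
  shows "prec Ob S u v as zs (comp_assign \<gamma> \<pi>) (comp_assign \<gamma> \<kappa>) \<longleftrightarrow>
    (\<exists>\<rho>. sat (override_on (comp_assign \<gamma> (inst u v (restr zs \<pi>) (restr zs \<kappa>))) \<rho> (set as))
             (set S \<union> Ob))"
proof -
  define f :: "'v sval \<Rightarrow> 'v sval" where "f = (\<lambda>s. Cst (sval_val \<gamma> s))"
  define \<sigma> where "\<sigma> = inst u v (restr zs \<pi>) (restr zs \<kappa>)"
  have restr_comp: "restr zs (assign_subst (comp_assign \<gamma> \<tau>)) = map f (restr zs \<tau>)" for \<tau>
    by (simp add: restr_def assign_subst_def comp_assign_def f_def)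
  have agree: "comp_assign \<epsilon> (inst3 u v as (map f (restr zs \<pi>)) (map f (restr zs \<kappa>))
            (restr as (assign_subst \<rho>))) x
      = override_on (comp_assign \<gamma> \<sigma>) \<rho> (set as) x"
    if "x \<in> vars (set S \<union> Ob)" for \<epsilon> \<rho> x
  proof (cases "x \<in> set as")
    case True
    then show ?thesis by (simp add: inst3_restr_assign_subst comp_assign_def)
  next
    case False
    then have "x \<in> set u \<union> set v"
      using that assms(5) by blast
    then have "inst u v (map f (restr zs \<pi>)) (map f (restr zs \<kappa>)) x = f (\<sigma> x)"
      unfolding \<sigma>_def using assms(1,2) by (intro inst_map) (simp_all add: restr_def)
    then show ?thesis
      using False by (simp add: inst3_restr_assign_subst comp_assign_def f_def)
  qed
  have "sat (comp_assign \<epsilon> (inst3 u v as (map f (restr zs \<pi>)) (map f (restr zs \<kappa>))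
            (restr as (assign_subst \<rho>)))) (set S \<union> Ob)
      = sat (override_on (comp_assign \<gamma> \<sigma>) \<rho> (set as)) (set S \<union> Ob)" for \<epsilon> \<rho>
    by (rule sat_cong, rule ballI, rule agree)
  then show ?thesis
    unfolding prec_def true_formula_def sat_subst_formula restr_comp \<sigma>_def by simp
qed

lemma sat_override_on: "A \<inter> vars F = {} \<Longrightarrow> sat (override_on \<alpha> \<rho> A) F = sat \<alpha> F"
  by (rule sat_cong) (auto simp: override_on_def)

context
  fixes u v as zs :: "'v list" and \<pi> \<kappa> :: "'v subst" and S :: "'v pbc list" and G Ob :: "'v formula"
  assumes u_len: "length u = length zs" and v_len: "length v = length zs"
    and ua: "set u \<inter> set as = {}" and va: "set v \<inter> set as = {}"
    and \<pi>_zs: "\<forall>z\<in>set zs. sval_vars (\<pi> z) \<inter> set as = {}"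
    and \<kappa>_zs: "\<forall>z\<in>set zs. sval_vars (\<kappa> z) \<inter> set as = {}"
    and vars_SO: "vars (set S \<union> Ob) \<subseteq> set u \<union> set v \<union> set as"
    and as_G: "set as \<inter> vars G = {}"
begin

lemma prec_comp_assign_if_derives:
  assumes spec: "is_spec as S"
    and derive_O: "G \<union> subst_formula (inst u v (restr zs \<pi>) (restr zs \<kappa>)) (set S)
      \<turnstile> subst_formula (inst u v (restr zs \<pi>) (restr zs \<kappa>)) Ob"
    and "sat \<alpha> G"
  shows "prec Ob S u v as zs (comp_assign \<alpha> \<pi>) (comp_assign \<alpha> \<kappa>)"
proof -
  define \<sigma> where "\<sigma> = inst u v (restr zs \<pi>) (restr zs \<kappa>)"
  obtain \<rho> where \<rho>: "sat (override_on (comp_assign \<alpha> \<sigma>) \<rho> (set as)) (set S)"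
    using is_spec_sat_override_on[OF spec] by blast
  define \<beta> where "\<beta> = override_on \<alpha> \<rho> (set as)"
  have \<beta>_\<sigma>: "comp_assign \<beta> \<sigma> = override_on (comp_assign \<alpha> \<sigma>) \<rho> (set as)"
    unfolding \<beta>_def \<sigma>_def using comp_assign_override_on_inst[OF ua va \<pi>_zs \<kappa>_zs] .
  have "sat \<beta> (G \<union> subst_formula \<sigma> (set S))"
    using \<rho> \<open>sat \<alpha> G\<close> sat_override_on[OF as_G] \<beta>_\<sigma> by (simp add: sat_subst_formula \<beta>_def)
  then have "sat \<beta> (subst_formula \<sigma> Ob)"
    using cp_derives_set_sound derive_O unfolding \<sigma>_def by blast
  then have "sat (override_on (comp_assign \<alpha> \<sigma>) \<rho> (set as)) (set S \<union> Ob)"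
    using \<rho> \<beta>_\<sigma> by (simp add: sat_subst_formula)
  then show ?thesis
    unfolding prec_comp_assign_iff[OF u_len v_len ua va vars_SO] \<sigma>_def by blast
qed

lemma not_prec_comp_assign_if_refutes:
  assumes derive_bot: "G \<union> subst_formula (inst u v (restr zs \<pi>) (restr zs \<kappa>)) (set S)
      \<union> subst_formula (inst u v (restr zs \<pi>) (restr zs \<kappa>)) Ob \<turnstile> {bot_pbc}"
    and "sat \<alpha> G"
  shows "\<not> prec Ob S u v as zs (comp_assign \<alpha> \<pi>) (comp_assign \<alpha> \<kappa>)"
proof
  define \<sigma> where "\<sigma> = inst u v (restr zs \<pi>) (restr zs \<kappa>)"
  assume "prec Ob S u v as zs (comp_assign \<alpha> \<pi>) (comp_assign \<alpha> \<kappa>)"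
  then obtain \<rho> where "sat (override_on (comp_assign \<alpha> \<sigma>) \<rho> (set as)) (set S \<union> Ob)"
    unfolding prec_comp_assign_iff[OF u_len v_len ua va vars_SO] \<sigma>_def by blast
  moreover have "comp_assign (override_on \<alpha> \<rho> (set as)) \<sigma> = override_on (comp_assign \<alpha> \<sigma>) \<rho> (set as)"
    unfolding \<sigma>_def using comp_assign_override_on_inst[OF ua va \<pi>_zs \<kappa>_zs] .
  ultimately have "sat (override_on \<alpha> \<rho> (set as)) (G \<union> subst_formula \<sigma> (set S) \<union> subst_formula \<sigma> Ob)"
    using \<open>sat \<alpha> G\<close> sat_override_on[OF as_G] by (simp add: sat_subst_formula)
  then show False
    using cp_derives_set_sound[OF derive_bot] not_sat_bot unfolding \<sigma>_def by blast
qed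

end

theorem lemma3:
  fixes G Ob :: "'v formula" and S :: "'v pbc list" and \<omega> :: "'v subst"
    and as zs u v :: "'v list"
  assumes supp_G: "supp \<omega> \<subseteq> vars G"
    and as_G: "set as \<inter> vars G = {}"
    and zs_as: "set zs \<inter> set as = {}"
    and \<omega>_zs: "\<forall>x\<in>set zs. sval_vars (\<omega> x) \<inter> set as = {}"
    and u_len: "length u = length zs" and v_len: "length v = length zs"
    and u_dist: "distinct u" and v_dist: "distinct v"
    and uv: "set u \<inter> set v = {}" and ua: "set u \<inter> set as = {}" and va: "set v \<inter> set as = {}"
    and vars_O: "vars Ob \<subseteq> set u \<union> set v \<union> set as"
    and vars_S: "vars (set S) \<subseteq> set u \<union> set v \<union> set as"
    and spec: "is_spec as S"
    and pre: "preorder_rel (prec Ob S u v as zs)"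
  shows
    "(G \<union> subst_formula (inst u v (restr zs \<omega>) (restr zs id_subst)) (set S)
        \<turnstile> subst_formula (inst u v (restr zs \<omega>) (restr zs id_subst)) Ob
      \<longrightarrow> (\<forall>\<alpha>. sat \<alpha> G \<longrightarrow> prec Ob S u v as zs (comp_assign \<alpha> \<omega>) \<alpha>))
   \<and> (G \<union> subst_formula (inst u v (restr zs id_subst) (restr zs \<omega>)) (set S)
        \<union> subst_formula (inst u v (restr zs id_subst) (restr zs \<omega>)) Ob \<turnstile> {bot_pbc}
      \<longrightarrow> (\<forall>\<alpha>. sat \<alpha> G \<longrightarrow> \<not> prec Ob S u v as zs \<alpha> (comp_assign \<alpha> \<omega>)))"
proof -
  have id_zs: "\<forall>z\<in>set zs. sval_vars (id_subst z) \<inter> set as = {}"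
    using zs_as by (auto simp: id_subst_def sval_vars_def)
  have vars_SO: "vars (set S \<union> Ob) \<subseteq> set u \<union> set v \<union> set as"
    using vars_O vars_S by (auto simp: vars_def)
  show ?thesis
    using prec_comp_assign_if_derives[OF u_len v_len ua va \<omega>_zs id_zs vars_SO as_G spec]
      not_prec_comp_assign_if_refutes[OF u_len v_len ua va id_zs \<omega>_zs vars_SO as_G]
    by simp
qed

end
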